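(* Let $\kappa_3,\kappa_4$ be constants and let $y$ be a $C^3$ function on an open interval of $r>0$ on which $\kappa_3r^2+\kappa_4\neq 0$. Then $y$ satisfies the third-order equation $$(\kappa_3r^2+\kappa_4)r^3y'''+(\kappa_3r^2-2\kappa_4)r^2y''-(\kappa_3r^2+2\kappa_4)ry'+8\kappa_4y=8$$ if and only if there exists a constant $\kappa_2$ such that $y$ satisfies the second-order equation $$(\kappa_3r^2+\kappa_4)y''+\kappa_3ry'-\frac{2\kappa_4}{r^2}y+\frac{2}{r^2}=2\kappa_2r^2 .$$
   Context: Primes denote derivatives with respect to $r$. (In the paper, $y=b^2$ is the metric function of a static spherically symmetric vacuum solution of conformal Killing gravity, the second-order equation arises from the conformal Killing parametrization and the third-order one from Harada's original field equations.) *)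

theory Defs
  imports "HOL-Analysis.Analysis"
begin

end

theory Submission
  imports Defs
begin

text \<open>The second-order expression divided by \<open>r\<^sup>2\<close> is a first integral of the third-order
  equation: its derivative is \<open>(third-order expression - 8) / r\<^sup>5\<close>. On an interval, a function
  is constant exactly when its derivative vanishes, and the constant is called \<open>2 \<kappa>\<^sub>2\<close>.\<close>

definition second_order_lhs ::
    "real \<Rightarrow> real \<Rightarrow> (real \<Rightarrow> real) \<Rightarrow> (real \<Rightarrow> real) \<Rightarrow> (real \<Rightarrow> real) \<Rightarrow> real \<Rightarrow> real" where
  "second_order_lhs k3 k4 y y1 y2 r =
     (k3 * r^2 + k4) * y2 r + k3 * r * y1 r - 2 * k4 / r^2 * y r + 2 / r^2"

definition third_order_lhs ::
    "real \<Rightarrow> real \<Rightarrow> (real \<Rightarrow> real) \<Rightarrow> (real \<Rightarrow> real) \<Rightarrow> (real \<Rightarrow> real) \<Rightarrow> (real \<Rightarrow> real)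
      \<Rightarrow> real \<Rightarrow> real" where
  "third_order_lhs k3 k4 y y1 y2 y3 r =
     (k3 * r^2 + k4) * r^3 * y3 r + (k3 * r^2 - 2 * k4) * r^2 * y2 r
       - (k3 * r^2 + 2 * k4) * r * y1 r + 8 * k4 * y r"

lemma derivative_zero_iff_constant_on_open_interval:
  fixes f f' :: "real \<Rightarrow> real"
  assumes "open I" and "is_interval I"
    and deriv: "\<And>x. x \<in> I \<Longrightarrow> (f has_real_derivative f' x) (at x)"
  shows "(\<forall>x\<in>I. f' x = 0) \<longleftrightarrow> (\<exists>c. \<forall>x\<in>I. f x = c)"
proof
  assume "\<forall>x\<in>I. f' x = 0"
  then have "\<forall>x\<in>I. (f has_real_derivative 0) (at x within I)"
    using deriv by (metis has_field_derivative_at_within)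
  then show "\<exists>c. \<forall>x\<in>I. f x = c"
    using has_field_derivative_zero_constant is_interval_convex[OF \<open>is_interval I\<close>] by blast
next
  assume "\<exists>c. \<forall>x\<in>I. f x = c"
  then obtain c where c: "\<And>x. x \<in> I \<Longrightarrow> f x = c" by blast
  show "\<forall>x\<in>I. f' x = 0"
  proof
    fix x assume x: "x \<in> I"
    have "((\<lambda>_. c) has_real_derivative 0) (at x)" by simp
    then have "(f has_real_derivative 0) (at x)"
      by (rule has_field_derivative_transform_within_open[where S = I])
        (use \<open>open I\<close> x c in auto)
    then show "f' x = 0" using deriv[OF x] DERIV_unique by blast
  qed
qed

definition second_order_lhs_deriv ::
    "real \<Rightarrow> real \<Rightarrow> (real \<Rightarrow> real) \<Rightarrow> (real \<Rightarrow> real) \<Rightarrow> (real \<Rightarrow> real) \<Rightarrow> (real \<Rightarrow> real)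
      \<Rightarrow> real \<Rightarrow> real" where
  "second_order_lhs_deriv k3 k4 y y1 y2 y3 r =
     (k3 * r^2 + k4) * y3 r + 3 * k3 * r * y2 r + (k3 - 2 * k4 / r^2) * y1 r
       + 4 * k4 / r^3 * y r - 4 / r^3"

lemma has_real_derivative_second_order_lhs:
  assumes "r \<noteq> 0"
    and "(y has_real_derivative y1 r) (at r)" "(y1 has_real_derivative y2 r) (at r)"
    and "(y2 has_real_derivative y3 r) (at r)"
  shows "(second_order_lhs k3 k4 y y1 y2 has_real_derivative
      second_order_lhs_deriv k3 k4 y y1 y2 y3 r) (at r)"
proof -
  have "(second_order_lhs k3 k4 y y1 y2 has_real_derivative
      2 * k3 * r * y2 r + (k3 * r^2 + k4) * y3 r + (k3 * y1 r + k3 * r * y2 r)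
        - (- (2 * k4 * (2 * r)) / (r^2)^2 * y r + 2 * k4 / r^2 * y1 r)
        + - (2 * (2 * r)) / (r^2)^2) (at r)"
    unfolding second_order_lhs_def [abs_def]
    by (rule derivative_eq_intros refl assms | use assms(1) in simp)+
  then show ?thesis
    using assms(1)
    by (simp add: second_order_lhs_deriv_def field_simps power2_eq_square power3_eq_cube)
qed

lemma third_order_lhs_eq:
  assumes "r \<noteq> 0"
  shows "third_order_lhs k3 k4 y y1 y2 y3 r - 8 =
    r^2 * (r * second_order_lhs_deriv k3 k4 y y1 y2 y3 r - 2 * second_order_lhs k3 k4 y y1 y2 r)"
  using assms
  by (simp add: third_order_lhs_def second_order_lhs_def second_order_lhs_deriv_def
      field_simps eval_nat_numeral)

lemma has_real_derivative_second_order_lhs_over_square: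
  assumes "r \<noteq> 0"
    and "(y has_real_derivative y1 r) (at r)" "(y1 has_real_derivative y2 r) (at r)"
    and "(y2 has_real_derivative y3 r) (at r)"
  shows "((\<lambda>r. second_order_lhs k3 k4 y y1 y2 r / r^2) has_real_derivative
      (third_order_lhs k3 k4 y y1 y2 y3 r - 8) / r^5) (at r)"
proof -
  let ?F = "second_order_lhs k3 k4 y y1 y2" and ?F' = "second_order_lhs_deriv k3 k4 y y1 y2 y3 r"
  have "(?F has_real_derivative ?F') (at r)"
    using assms by (rule has_real_derivative_second_order_lhs)
  then have "((\<lambda>r. ?F r / r^2) has_real_derivative (?F' * r^2 - ?F r * (2 * r)) / (r^2)^2) (at r)"
    by (auto intro!: derivative_eq_intros simp: assms(1))
  also have "(?F' * r^2 - ?F r * (2 * r)) / (r^2)^2 = (third_order_lhs k3 k4 y y1 y2 y3 r - 8) / r^5"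
    unfolding third_order_lhs_eq[OF assms(1)] using assms(1)
    by (simp add: field_simps eval_nat_numeral)
  finally show ?thesis .
qed

theorem proposition7:
  fixes k3 k4 :: real and I :: "real set"
    and y y1 y2 y3 :: "real \<Rightarrow> real"
  assumes I_open: "open I" and I_int: "is_interval I" and I_ne: "I \<noteq> {}"
    and I_pos: "I \<subseteq> {0<..}"
    and nz: "\<forall>r\<in>I. k3 * r^2 + k4 \<noteq> 0"
    and d1: "\<forall>r\<in>I. (y has_real_derivative y1 r) (at r)"
    and d2: "\<forall>r\<in>I. (y1 has_real_derivative y2 r) (at r)"
    and d3: "\<forall>r\<in>I. (y2 has_real_derivative y3 r) (at r)"
    and c3: "continuous_on I y3"
  shows "(\<forall>r\<in>I. (k3 * r^2 + k4) * r^3 * y3 r + (k3 * r^2 - 2 * k4) * r^2 * y2 r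
                   - (k3 * r^2 + 2 * k4) * r * y1 r + 8 * k4 * y r = 8)
     \<longleftrightarrow> (\<exists>k2::real. \<forall>r\<in>I. (k3 * r^2 + k4) * y2 r + k3 * r * y1 r
                   - 2 * k4 / r^2 * y r + 2 / r^2 = 2 * k2 * r^2)"
proof -
  have r_pos: "r > 0" if "r \<in> I" for r using I_pos that by auto
  have divide_square_eq: "F r / r^2 = 2 * k2 \<longleftrightarrow> F r = 2 * k2 * r^2" if "r \<in> I"
    for F :: "real \<Rightarrow> real" and r k2
    using r_pos[OF that] by (simp add: divide_eq_eq)
  have "(\<forall>r\<in>I. third_order_lhs k3 k4 y y1 y2 y3 r = 8)
      \<longleftrightarrow> (\<forall>r\<in>I. (third_order_lhs k3 k4 y y1 y2 y3 r - 8) / r^5 = 0)"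
    using r_pos by fastforce
  also have "\<dots> \<longleftrightarrow> (\<exists>c. \<forall>r\<in>I. second_order_lhs k3 k4 y y1 y2 r / r^2 = c)"
    using I_open I_int d1 d2 d3 r_pos
    by (intro derivative_zero_iff_constant_on_open_interval
        has_real_derivative_second_order_lhs_over_square) auto
  also have "\<dots> \<longleftrightarrow> (\<exists>k2. \<forall>r\<in>I. second_order_lhs k3 k4 y y1 y2 r / r^2 = 2 * k2)"
    by (metis mult_2 field_sum_of_halves)
  also have "\<dots> \<longleftrightarrow> (\<exists>k2. \<forall>r\<in>I. second_order_lhs k3 k4 y y1 y2 r = 2 * k2 * r^2)"
    using divide_square_eq by (simp cong: ball_cong)
  finally show ?thesis
    by (simp only: third_order_lhs_def second_order_lhs_def)
qed

end
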